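(* Let $f=a_0+a_1 z+\cdots+a_mz^m\in \mathbb{Z}[z]$ be primitive (the greatest common divisor of its coefficients is $1$). Suppose there exist positive real numbers $\alpha<\beta$ and an index $j\in\{0,1,\ldots,m\}$ such that \[ |a_j| \alpha^j>\sum_{i=0,\, i\neq j}^m |a_i|\beta^i. \] Further, suppose there exist natural numbers $n$, $d$, $k$, $\ell\leq m$, and a prime $p$ with $p\nmid d$ such that $\beta-d\geq n\geq \alpha+d$, $f(n)=\pm p^k d$, $\gcd(k,\ell)=1$, $p^k$ divides $\frac{f^{(i)}(n)}{i!}$ for each $i=0, 1, \ldots,\ell-1$, and, in case $k>1$, also $p\nmid \frac{f^{(\ell)}(n)}{\ell!}$. Then $f$ is irreducible in $\mathbb{Z}[z]$.
   Context: $f^{(i)}$ denotes the $i$-th derivative of $f$ with respect to $z$. Natural numbers are positive integers. *)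

theory Defs
  imports "HOL-Computational_Algebra.Computational_Algebra"
begin

end

theory Submission
  imports Defs
begin

text \<open>
  Suppose \<open>f = g h\<close> with non-units \<open>g, h\<close>; as \<open>f\<close> is primitive, both have positive
  degree. The dominant coefficient keeps every complex root \<open>\<theta>\<close> of \<open>f\<close> out of the annulus
  \<open>\<alpha> \<le> |\<theta>| \<le> \<beta>\<close>, so \<open>|n - \<theta>| > d\<close>, and writing \<open>g\<close> and \<open>h\<close> as products of linear
  factors gives \<open>|g(n)|, |h(n)| > d\<close>. Since \<open>g(n) h(n) = \<plusminus>p\<^sup>k d\<close> and \<open>p\<close> does not
  divide \<open>d\<close>, the prime \<open>p\<close> divides both \<open>g(n)\<close> and \<open>h(n)\<close>.

  Now shift to \<open>F(z) = f(z + n) = G(z) H(z)\<close>, whose coefficients are \<open>f^(i)(n) / i!\<close>.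
  The divisibility hypotheses say that the \<open>p\<close>-adic Newton polygon of \<open>F\<close> begins with the edge
  from \<open>(0, k)\<close> to \<open>(l, 0)\<close>, which contains no other lattice point as \<open>gcd(k, l) = 1\<close>.
  By Dumas' theorem this edge is the sum of the edges of the same slope of \<open>G\<close> and \<open>H\<close>,
  so one of the two factors carries all of it and the constant term \<open>g(n)\<close> or \<open>h(n)\<close> of the
  other is prime to \<open>p\<close>, a contradiction.
\<close>

section \<open>Ultrametric behaviour of multiplicities\<close>

lemma multiplicity_sum_ge_termE:
  fixes t :: "'b \<Rightarrow> 'a :: factorial_semiring"
  assumes "finite S" "sum t S \<noteq> 0" "\<not> is_unit p"
  obtains i where "i \<in> S" "t i \<noteq> 0" "multiplicity p (t i) \<le> multiplicity p (sum t S)"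
proof (rule ccontr)
  assume none: "\<not> thesis"
  note witness = that
  let ?m = "multiplicity p (sum t S)"
  have "p ^ Suc ?m dvd t i" if "i \<in> S" for i
  proof (cases "t i = 0")
    case False
    then have "\<not> multiplicity p (t i) \<le> ?m"
      using witness[OF that] none by blast
    then have "Suc ?m \<le> multiplicity p (t i)"
      by simp
    then show ?thesis
      by (rule multiplicity_dvd')
  qed simp
  then have "p ^ Suc ?m dvd sum t S"
    by (rule dvd_sum)
  then have "Suc ?m \<le> ?m"
    by (rule multiplicity_geI[OF assms(2,3)])
  then show False
    by simp
qed

lemma multiplicity_sum_eq_unique_min:
  fixes t :: "'b \<Rightarrow> 'a :: factorial_semiring"
  assumes "finite S" "r \<in> S" "t r \<noteq> 0" "\<not> is_unit p"
    and "\<And>i. i \<in> S - {r} \<Longrightarrow> t i \<noteq> 0 \<Longrightarrow> multiplicity p (t r) < multiplicity p (t i)"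
  shows "sum t S \<noteq> 0 \<and> multiplicity p (sum t S) = multiplicity p (t r)"
proof -
  define m where "m = multiplicity p (t r)"
  have split: "sum t S = t r + sum t (S - {r})"
    using assms(1,2) by (rule sum.remove)
  have "p ^ Suc m dvd t i" if "i \<in> S - {r}" for i
  proof (cases "t i = 0")
    case False
    then show ?thesis
      using assms(5)[OF that] unfolding m_def by (intro multiplicity_dvd') (simp add: Suc_le_eq)
  qed simp
  then have rest: "p ^ Suc m dvd sum t (S - {r})"
    by (rule dvd_sum)
  have "\<not> p ^ Suc m dvd t r"
    using power_dvd_iff_le_multiplicity[OF assms(3,4), of "Suc m"] unfolding m_def by simp
  then have not_dvd: "\<not> p ^ Suc m dvd sum t S"
    using rest unfolding split by (simp add: dvd_add_left_iff)
  have "p ^ m dvd sum t (S - {r})"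
    by (rule dvd_trans[OF le_imp_power_dvd rest]) simp
  then have "p ^ m dvd sum t S"
    unfolding split m_def by (intro dvd_add multiplicity_dvd)
  then have "multiplicity p (sum t S) = m"
    using not_dvd by (rule multiplicity_eqI)
  with not_dvd show ?thesis
    unfolding m_def by auto
qed

section \<open>Edges of Newton polygons\<close>

text \<open>
  The Newton polygon of \<open>P\<close> is the lower convex hull of the points \<open>(i, v\<^sub>p(coeff P i))\<close>.
  \<open>newton_weight p u v P i\<close> is \<open>u\<close> times the height at abscissa \<open>0\<close> of the line of slope
  \<open>-v/u\<close> through the \<open>i\<close>-th point, so \<open>newton_vertex p u v P r A\<close> says that \<open>r\<close> is the right
  end of the edge of slope \<open>-v/u\<close> (which may be a single vertex) and that the line supporting
  that edge meets the vertical axis at height \<open>A/u\<close>.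
\<close>

definition newton_weight :: "'a :: factorial_semiring \<Rightarrow> nat \<Rightarrow> nat \<Rightarrow> 'a poly \<Rightarrow> nat \<Rightarrow> nat" where
  "newton_weight p u v P i = u * multiplicity p (coeff P i) + v * i"

definition newton_vertex ::
    "'a :: factorial_semiring \<Rightarrow> nat \<Rightarrow> nat \<Rightarrow> 'a poly \<Rightarrow> nat \<Rightarrow> nat \<Rightarrow> bool" where
  "newton_vertex p u v P r A \<longleftrightarrow>
     coeff P r \<noteq> 0 \<and> newton_weight p u v P r = A \<and>
     (\<forall>i. coeff P i \<noteq> 0 \<longrightarrow> A \<le> newton_weight p u v P i) \<and>
     (\<forall>i>r. coeff P i \<noteq> 0 \<longrightarrow> A < newton_weight p u v P i)"

lemma newton_vertex_exists:
  assumes "P \<noteq> 0"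
  obtains r A where "newton_vertex p u v P r A"
proof -
  let ?w = "newton_weight p u v P"
  define S where "S = {i. coeff P i \<noteq> 0}"
  have "degree P \<in> S"
    unfolding S_def using assms by simp
  then have "S \<noteq> {}"
    by blast
  moreover have "finite S"
    unfolding S_def by (rule finite_subset[of _ "{..degree P}"]) (auto intro: le_degree)
  ultimately have A: "Min (?w ` S) \<in> ?w ` S" "\<And>i. i \<in> S \<Longrightarrow> Min (?w ` S) \<le> ?w i"
    by auto
  define T where "T = {i \<in> S. ?w i = Min (?w ` S)}"
  have "finite T" "T \<noteq> {}"
    using \<open>finite S\<close> A(1) unfolding T_def by auto
  then have r: "Max T \<in> T" and r_max: "\<And>i. i \<in> T \<Longrightarrow> i \<le> Max T"
    by auto
  have "newton_vertex p u v P (Max T) (Min (?w ` S))"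
    unfolding newton_vertex_def
  proof (intro conjI allI impI)
    show "coeff P (Max T) \<noteq> 0" "?w (Max T) = Min (?w ` S)"
      using r unfolding T_def S_def by auto
    show "Min (?w ` S) \<le> ?w i" if "coeff P i \<noteq> 0" for i
      using A(2) that unfolding S_def by auto
    show "Min (?w ` S) < ?w i" if "Max T < i" "coeff P i \<noteq> 0" for i
      using A(2)[of i] r_max[of i] that unfolding T_def S_def by fastforce
  qed
  then show thesis ..
qed

lemma newton_vertex_unique:
  assumes "newton_vertex p u v P r A" "newton_vertex p u v P s B"
  shows "r = s \<and> A = B"
proof -
  have "A = B"
    using assms unfolding newton_vertex_def by (metis le_antisym)
  moreover have "r = s"
    using assms \<open>A = B\<close> unfolding newton_vertex_def by (metis less_irrefl linorder_neqE_nat)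
  ultimately show ?thesis
    by simp
qed

lemma newton_weight_mult_term:
  assumes "prime_elem p" "coeff P i \<noteq> 0" "coeff Q (N - i) \<noteq> 0" "i \<le> N"
  shows "u * multiplicity p (coeff P i * coeff Q (N - i)) + v * N =
           newton_weight p u v P i + newton_weight p u v Q (N - i)"
proof -
  have "v * N = v * i + v * (N - i)"
    using assms(4) by (simp flip: add_mult_distrib2)
  then show ?thesis
    using assms(1-3) by (simp add: newton_weight_def prime_elem_multiplicity_mult_distrib algebra_simps)
qed

lemma newton_weight_mult_term_bounds:
  assumes p: "prime_elem p"
    and P: "newton_vertex p u v P r A" and Q: "newton_vertex p u v Q s B"
    and nonzero: "coeff P i * coeff Q (N - i) \<noteq> 0" and i: "i \<le> N"
  shows "A + B \<le> u * multiplicity p (coeff P i * coeff Q (N - i)) + v * N"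
    and "r < i \<or> s < N - i \<Longrightarrow> A + B < u * multiplicity p (coeff P i * coeff Q (N - i)) + v * N"
  using P Q nonzero newton_weight_mult_term[OF p _ _ i, of P Q u v]
  unfolding newton_vertex_def by (auto intro: add_mono add_less_le_mono add_le_less_mono)

lemma newton_weight_mult_ge:
  assumes p: "prime_elem p"
    and P: "newton_vertex p u v P r A" and Q: "newton_vertex p u v Q s B"
    and nonzero: "coeff (P * Q) N \<noteq> 0"
  shows "A + B \<le> newton_weight p u v (P * Q) N"
    and "r + s < N \<Longrightarrow> A + B < newton_weight p u v (P * Q) N"
proof -
  let ?t = "\<lambda>i. coeff P i * coeff Q (N - i)"
  have "sum ?t {..N} \<noteq> 0"
    using nonzero by (simp add: coeff_mult)
  moreover have "\<not> is_unit p"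
    using p by (simp add: prime_elem_def)
  ultimately obtain i where i: "i \<in> {..N}" "?t i \<noteq> 0"
      "multiplicity p (?t i) \<le> multiplicity p (sum ?t {..N})"
    by (rule multiplicity_sum_ge_termE[OF finite_atMost])
  then have term_le: "u * multiplicity p (?t i) + v * N \<le> newton_weight p u v (P * Q) N"
    by (simp add: newton_weight_def coeff_mult)
  note bounds = newton_weight_mult_term_bounds[OF p P Q i(2)]
  show "A + B \<le> newton_weight p u v (P * Q) N"
    using bounds(1) i(1) term_le by simp
  show "A + B < newton_weight p u v (P * Q) N" if "r + s < N"
    using bounds(2) i(1) term_le that by fastforce
qed

lemma newton_weight_mult_at_vertex:
  assumes p: "prime_elem p"
    and P: "newton_vertex p u v P r A" and Q: "newton_vertex p u v Q s B"
  shows "coeff (P * Q) (r + s) \<noteq> 0 \<and> newton_weight p u v (P * Q) (r + s) = A + B"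
proof -
  let ?t = "\<lambda>i. coeff P i * coeff Q (r + s - i)"
  have "?t r \<noteq> 0"
    using P Q by (simp add: newton_vertex_def)
  moreover have weight_r: "u * multiplicity p (?t r) + v * (r + s) = A + B"
    using P Q newton_weight_mult_term[OF p, of P r Q "r + s" u v]
    by (simp add: newton_vertex_def)
  moreover have "multiplicity p (?t r) < multiplicity p (?t i)"
    if "i \<in> {..r + s} - {r}" "?t i \<noteq> 0" for i
  proof -
    have "i \<le> r + s" "r < i \<or> s < r + s - i"
      using that(1) by auto
    then have "A + B < u * multiplicity p (?t i) + v * (r + s)"
      using newton_weight_mult_term_bounds(2)[OF p P Q that(2)] by blast
    then have "u * multiplicity p (?t r) < u * multiplicity p (?t i)"
      using weight_r by linarith
    then show ?thesis
      by simp
  qed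
  moreover have "\<not> is_unit p"
    using p by (simp add: prime_elem_def)
  ultimately show ?thesis
    using multiplicity_sum_eq_unique_min[of "{..r + s}" r ?t p]
    by (auto simp: coeff_mult newton_weight_def)
qed

text \<open>Dumas' theorem, for the edges of a single slope.\<close>

lemma newton_vertex_mult:
  assumes "prime_elem p" "newton_vertex p u v P r A" "newton_vertex p u v Q s B"
  shows "newton_vertex p u v (P * Q) (r + s) (A + B)"
  using newton_weight_mult_ge[OF assms] newton_weight_mult_at_vertex[OF assms]
  unfolding newton_vertex_def by blast

lemma newton_vertex_of_segment:
  assumes p: "prime_elem p" and k: "0 < k"
    and below: "\<And>i. i < l \<Longrightarrow> p ^ k dvd coeff F i" and last: "\<not> p dvd coeff F l"
  shows "newton_vertex p l k F l (k * l)"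
  unfolding newton_vertex_def
proof (intro conjI allI impI)
  show "coeff F l \<noteq> 0"
    using last by auto
  show "newton_weight p l k F l = k * l"
    using last by (simp add: newton_weight_def not_dvd_imp_multiplicity_0)
  show "k * l \<le> newton_weight p l k F i" if "coeff F i \<noteq> 0" for i
  proof (cases "i < l")
    case True
    have "k \<le> multiplicity p (coeff F i)"
      using below[OF True] that p multiplicity_geI[of _ p k] by (simp add: prime_elem_def)
    then show ?thesis
      unfolding newton_weight_def by (simp add: mult.commute trans_le_add1)
  next
    case False
    then show ?thesis
      unfolding newton_weight_def by (simp add: trans_le_add2)
  qed
  show "k * l < newton_weight p l k F i" if "l < i" for i
    using that k unfolding newton_weight_def by (simp add: trans_less_add2)
qed

lemma coprime_segment_no_lattice_point:
  fixes k l e a r :: nat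
  assumes "coprime k l" "0 < r" "r \<le> l" "l * e + k * r = l * a"
  shows "k \<le> a"
proof -
  have "k * r = l * (a - e)"
    using assms(4) by (simp add: diff_mult_distrib2)
  then have "l dvd r"
    using assms(1) coprime_dvd_mult_right_iff[of l k r] by (simp add: coprime_commute)
  then have "r = l"
    using assms(2,3) by (simp add: dvd_imp_le le_antisym)
  then have "l * (e + k) = l * a"
    using assms(4) by (simp add: algebra_simps)
  then show ?thesis
    using assms(2,3) by simp
qed

lemma coprime_newton_segment_no_split:
  fixes G H :: "'a :: factorial_semiring poly"
  assumes p: "prime_elem p" and kl: "coprime k l" "0 < l"
    and F: "newton_vertex p l k (G * H) l (k * l)"
    and G0: "coeff G 0 \<noteq> 0" and H0: "coeff H 0 \<noteq> 0"
    and val: "multiplicity p (coeff G 0) + multiplicity p (coeff H 0) = k"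
  shows "multiplicity p (coeff G 0) = 0 \<or> multiplicity p (coeff H 0) = 0"
proof -
  define a b where "a = multiplicity p (coeff G 0)" and "b = multiplicity p (coeff H 0)"
  have "G \<noteq> 0" "H \<noteq> 0"
    using G0 H0 by auto
  then obtain r s A B where G: "newton_vertex p l k G r A" and H: "newton_vertex p l k H s B"
    by (metis newton_vertex_exists)
  have rs: "r + s = l" and AB: "A + B = k * l"
    using newton_vertex_unique[OF newton_vertex_mult[OF p G H] F] by auto
  have "A \<le> newton_weight p l k G 0" "B \<le> newton_weight p l k H 0"
    using G H G0 H0 by (simp_all add: newton_vertex_def)
  then have "A \<le> l * a" "B \<le> l * b"
    unfolding newton_weight_def a_def b_def by simp_all
  moreover have "l * a + l * b = k * l"
    using val unfolding a_def b_def by (simp flip: add_mult_distrib2)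
  ultimately have A: "A = l * a" and B: "B = l * b"
    using AB by linarith+
  have no_interior: "k \<le> c" if "newton_vertex p l k P t (l * c)" "0 < t" "t \<le> l" for P t c
  proof -
    have "l * multiplicity p (coeff P t) + k * t = l * c"
      using that(1) by (simp add: newton_vertex_def newton_weight_def)
    then show ?thesis
      by (rule coprime_segment_no_lattice_point[OF kl(1) that(2,3)])
  qed
  consider "0 < r" | "0 < s" | "r = 0" "s = 0"
    by auto
  then show ?thesis
  proof cases
    case 1
    then have "k \<le> a"
      using no_interior[OF G[unfolded A]] rs by simp
    then show ?thesis
      using val unfolding a_def b_def by simp
  next
    case 2
    then have "k \<le> b"
      using no_interior[OF H[unfolded B]] rs by simp
    then show ?thesis
      using val unfolding a_def b_def by simp
  next
    case 3
    then show ?thesis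
      using rs kl(2) by simp
  qed
qed

lemma coeff_taylor_shift:
  fixes f :: "'a :: {idom_divide, semiring_char_0} poly"
  shows "coeff (f \<circ>\<^sub>p [:c, 1:]) i = poly ((pderiv ^^ i) f) c div fact i"
proof -
  have "(pderiv ^^ i) (f \<circ>\<^sub>p [:c, 1:]) = (pderiv ^^ i) f \<circ>\<^sub>p [:c, 1:]"
    by (induction i) (simp_all add: pderiv_pcompose pderiv_pCons)
  then have "poly ((pderiv ^^ i) (f \<circ>\<^sub>p [:c, 1:])) 0 = poly ((pderiv ^^ i) f) c"
    by (simp add: poly_pcompose)
  then have "poly ((pderiv ^^ i) f) c = fact i * coeff (f \<circ>\<^sub>p [:c, 1:]) i"
    by (simp add: poly_0_coeff_0 coeff_higher_pderiv pochhammer_fact)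
  then show ?thesis
    by simp
qed

lemma prime_dvd_at_most_one_factor_value:
  fixes f g h :: "'a :: factorial_semiring poly"
  assumes p: "prime_elem p" and kl: "coprime k l" "0 < l"
    and fgh: "f = g * h" and fc: "poly f c \<noteq> 0" "multiplicity p (poly f c) = k"
    and below: "\<And>i. i < l \<Longrightarrow> p ^ k dvd coeff (f \<circ>\<^sub>p [:c, 1:]) i"
    and last: "1 < k \<Longrightarrow> \<not> p dvd coeff (f \<circ>\<^sub>p [:c, 1:]) l"
  shows "\<not> p dvd poly g c \<or> \<not> p dvd poly h c"
proof (rule ccontr)
  assume both: "\<not> ?thesis"
  define G H where "G = g \<circ>\<^sub>p [:c, 1:]" and "H = h \<circ>\<^sub>p [:c, 1:]"
  have GH: "f \<circ>\<^sub>p [:c, 1:] = G * H" "coeff G 0 = poly g c" "coeff H 0 = poly h c"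
    unfolding G_def H_def fgh by (simp_all add: pcompose_mult coeff_pcompose_0)
  have nonzero: "poly g c \<noteq> 0" "poly h c \<noteq> 0"
    using fc(1) fgh by auto
  then have pos: "0 < multiplicity p (poly g c)" "0 < multiplicity p (poly h c)"
    using both p by (simp_all add: prime_multiplicity_gt_zero_iff)
  have val: "multiplicity p (poly g c) + multiplicity p (poly h c) = k"
    using fc nonzero p fgh by (simp add: prime_elem_multiplicity_mult_distrib)
  then have "1 < k"
    using pos by linarith
  then have "newton_vertex p l k (G * H) l (k * l)"
    using newton_vertex_of_segment[OF p _ below last] GH(1) by simp
  then have "multiplicity p (coeff G 0) = 0 \<or> multiplicity p (coeff H 0) = 0"
    by (rule coprime_newton_segment_no_split[OF p kl]) (use GH nonzero val in simp_all)
  then show False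
    using GH pos by simp
qed

section \<open>Complex roots and values at integers\<close>

lemma no_root_in_annulus_if_dominant_coeff:
  fixes f :: "'a :: real_normed_field poly"
  assumes j: "j \<le> degree f" and \<alpha>: "0 \<le> \<alpha>"
    and dom: "(\<Sum>i\<in>{0..degree f} - {j}. norm (coeff f i) * \<beta> ^ i) < norm (coeff f j) * \<alpha> ^ j"
    and root: "poly f z = 0"
  shows "norm z < \<alpha> \<or> \<beta> < norm z"
proof (rule ccontr)
  assume "\<not> ?thesis"
  then have z: "\<alpha> \<le> norm z" "norm z \<le> \<beta>"
    by auto
  define S where "S = {0..degree f} - {j}"
  have "0 = (\<Sum>i\<in>{0..degree f}. coeff f i * z ^ i)"
    using root by (simp add: poly_altdef atLeast0AtMost)
  also have "\<dots> = coeff f j * z ^ j + (\<Sum>i\<in>S. coeff f i * z ^ i)"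
    unfolding S_def using j by (subst sum.remove[of _ j]) auto
  finally have eq: "coeff f j * z ^ j = - (\<Sum>i\<in>S. coeff f i * z ^ i)"
    by (simp add: eq_neg_iff_add_eq_0)
  have "norm (coeff f j) * \<alpha> ^ j \<le> norm (coeff f j * z ^ j)"
    using z \<alpha> by (simp add: norm_mult norm_power mult_left_mono power_mono)
  also have "\<dots> \<le> (\<Sum>i\<in>S. norm (coeff f i * z ^ i))"
    unfolding eq norm_minus_cancel by (rule norm_sum)
  also have "\<dots> \<le> (\<Sum>i\<in>S. norm (coeff f i) * \<beta> ^ i)"
    using z by (intro sum_mono) (simp add: norm_mult norm_power mult_left_mono power_mono)
  finally show False
    using dom unfolding S_def by simp
qed

lemma int_poly_roots_far_if_dominant_coeff:
  fixes f :: "int poly" and z :: complex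
  assumes "j \<le> degree f" "0 \<le> \<alpha>"
    and "(\<Sum>i\<in>{0..degree f} - {j}. \<bar>real_of_int (coeff f i)\<bar> * \<beta> ^ i) <
           \<bar>real_of_int (coeff f j)\<bar> * \<alpha> ^ j"
    and x: "0 \<le> x" "\<alpha> + D \<le> x" "x \<le> \<beta> - D"
    and root: "poly (map_poly of_int f) z = 0"
  shows "D < norm (of_real x - z)"
proof -
  have "degree (map_poly of_int f :: complex poly) = degree f"
    by (rule degree_map_poly) simp
  then have "norm z < \<alpha> \<or> \<beta> < norm z"
    using no_root_in_annulus_if_dominant_coeff[OF _ _ _ root, of j \<alpha> \<beta>] assms(1-3)
    by (simp add: coeff_map_poly)
  then have "D < \<bar>x - norm z\<bar>"
    using x by auto
  moreover have "\<bar>x - norm z\<bar> \<le> norm (of_real x - z)"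
    using norm_triangle_ineq3[of "of_real x" z] x(1) by simp
  ultimately show ?thesis
    by linarith
qed

lemma prod_mset_gt:
  fixes M :: "'a :: linordered_idom multiset"
  assumes "M \<noteq> {#}" "1 \<le> c" "\<And>x. x \<in># M \<Longrightarrow> c < x"
  shows "c < prod_mset M"
  using assms
proof (induction M)
  case (add x M)
  show ?case
  proof (cases "M = {#}")
    case False
    have "c < x"
      using add.prems(3) by simp
    moreover have "c < prod_mset M"
      using False add by simp
    ultimately have "c < prod_mset M" "1 < x"
      using add.prems(2) by auto
    then have "1 * prod_mset M < x * prod_mset M"
      using add.prems(2) by (intro mult_strict_right_mono) auto
    with \<open>c < prod_mset M\<close> show ?thesis
      by simp
  qed (use add.prems in simp)
qed simp

lemma norm_prod_mset: "norm (\<Prod>x\<in>#M. f x) = (\<Prod>x\<in>#M. norm (f x :: 'a :: real_normed_field))"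
  by (induction M) (simp_all add: norm_mult)

lemma norm_poly_gt_if_roots_far:
  fixes q :: "complex poly"
  assumes "0 < degree q" "1 \<le> norm (lead_coeff q)" "1 \<le> D"
    and far: "\<And>z. poly q z = 0 \<Longrightarrow> D < norm (x - z)"
  shows "D < norm (poly q x)"
proof -
  let ?dist = "\<Prod>z\<in>#proots q. norm (x - z)"
  have "q \<noteq> 0"
    using assms(1) by auto
  have "poly q x = lead_coeff q * (\<Prod>z\<in>#proots q. x - z)"
    by (subst (1) complex_poly_decompose_multiset[symmetric]) (simp add: poly_prod_mset)
  then have "norm (poly q x) = norm (lead_coeff q) * ?dist"
    by (simp add: norm_mult norm_prod_mset)
  moreover have dist_gt: "D < ?dist"
  proof (rule prod_mset_gt)
    show "image_mset (\<lambda>z. norm (x - z)) (proots q) \<noteq> {#}"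
      using assms(1) size_proots_complex[of q] by auto
  qed (use assms(3) far \<open>q \<noteq> 0\<close> in auto)
  moreover have "1 * ?dist \<le> norm (lead_coeff q) * ?dist"
    using assms(2,3) dist_gt by (intro mult_right_mono) auto
  ultimately show ?thesis
    by simp
qed

lemma map_poly_of_int_mult:
  "map_poly of_int (p * q) = (map_poly of_int p * map_poly of_int q :: 'a :: comm_ring_1 poly)"
  by (rule poly_eqI) (simp add: coeff_map_poly coeff_mult)

lemma poly_map_poly_of_int:
  "poly (map_poly of_int p) (of_int x) = (of_int (poly p x) :: 'a :: comm_ring_1)"
  by (induction p) (simp_all add: map_poly_pCons)

lemma abs_poly_factor_gt_if_roots_far:
  fixes f g :: "int poly" and x :: int
  assumes "g dvd f" "f \<noteq> 0" "0 < degree g" "1 \<le> D"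
    and far: "\<And>z :: complex. poly (map_poly of_int f) z = 0 \<Longrightarrow> D < norm (of_int x - z)"
  shows "D < \<bar>poly g x\<bar>"
proof -
  obtain h where f: "f = g * h"
    using assms(1) by blast
  let ?g = "map_poly of_int g :: complex poly"
  have deg: "degree ?g = degree g"
    by (rule degree_map_poly) simp
  have "lead_coeff g \<noteq> 0"
    using assms(2) f by auto
  then have "1 \<le> \<bar>lead_coeff g\<bar>"
    by linarith
  moreover have "norm (lead_coeff ?g) = of_int \<bar>lead_coeff g\<bar>"
    by (simp add: deg coeff_map_poly)
  ultimately have "1 \<le> norm (lead_coeff ?g)"
    by simp
  moreover have "D < norm (of_int x - z)" if "poly ?g z = 0" for z
    using far[of z] that by (simp add: f map_poly_of_int_mult)
  ultimately have "D < norm (poly ?g (of_int x))"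
    using norm_poly_gt_if_roots_far[of ?g D "of_int x"] assms(3,4) deg by simp
  then show ?thesis
    by (simp only: poly_map_poly_of_int norm_of_int)
qed

lemma prime_dvd_if_divisor_gt:
  fixes x d :: int
  assumes "prime p" "x dvd p ^ k * d" "d \<noteq> 0" "\<bar>d\<bar> < \<bar>x\<bar>"
  shows "p dvd x"
proof (rule ccontr)
  assume "\<not> p dvd x"
  then have "coprime (p ^ k) x"
    using assms(1) by (simp add: prime_imp_coprime)
  then have "x dvd d"
    using assms(2) coprime_dvd_mult_right_iff[of x "p ^ k" d] by (simp add: coprime_commute)
  then show False
    using dvd_imp_le_int[OF assms(3)] assms(4) by fastforce
qed

lemma prime_dvd_factor_value_if_roots_far:
  fixes f q :: "int poly" and p d x :: int
  assumes "q dvd f" "f \<noteq> 0" "0 < degree q" "prime p" "0 < d"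
    and "poly f x dvd p ^ k * d"
    and far: "\<And>z :: complex. poly (map_poly of_int f) z = 0 \<Longrightarrow> d < norm (of_int x - z)"
  shows "p dvd poly q x"
proof (rule prime_dvd_if_divisor_gt)
  show "prime p" "d \<noteq> 0"
    using assms(4,5) by simp_all
  obtain r where "f = q * r"
    using assms(1) by blast
  then show "poly q x dvd p ^ k * d"
    using assms(6) by (simp add: dvd_mult_left)
  have "d < \<bar>poly q x\<bar>"
    using abs_poly_factor_gt_if_roots_far[OF assms(1-3) _ far] assms(5) by simp
  then show "\<bar>d\<bar> < \<bar>poly q x\<bar>"
    using assms(5) by linarith
qed

lemma primitive_not_unit_imp_degree_pos:
  fixes p :: "'a :: {semiring_gcd, idom_divide} poly"
  assumes "content p = 1" "\<not> is_unit p"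
  shows "0 < degree p"
proof (rule ccontr)
  assume "\<not> 0 < degree p"
  then obtain c where "p = [:c:]"
    by (metis degree_eq_zeroE not_gr0)
  with assms show False
    by (simp add: is_unit_const_poly_iff normalize_1_iff)
qed

theorem theorem2:
  fixes f :: "int poly" and \<alpha> \<beta> :: real and j n d k l p :: nat
  assumes prim: "content f = 1"
    and ab: "0 < \<alpha>" "\<alpha> < \<beta>"
    and j: "j \<le> degree f"
    and dom: "\<bar>real_of_int (coeff f j)\<bar> * \<alpha> ^ j >
              (\<Sum>i\<in>{0..degree f} - {j}. \<bar>real_of_int (coeff f i)\<bar> * \<beta> ^ i)"
    and pos: "n > 0" "d > 0" "k > 0" "l > 0"
    and l: "l \<le> degree f"
    and p: "prime p" "\<not> p dvd d"
    and nb: "\<beta> - real d \<ge> real n" "real n \<ge> \<alpha> + real d"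
    and fn: "poly f (int n) = int (p ^ k * d) \<or> poly f (int n) = - int (p ^ k * d)"
    and gcd: "gcd k l = 1"
    and divs: "\<And>i. i < l \<Longrightarrow>
                 int (p ^ k) dvd (poly ((pderiv ^^ i) f) (int n) div fact i)"
    and ndiv: "k > 1 \<Longrightarrow> \<not> int p dvd (poly ((pderiv ^^ l) f) (int n) div fact l)"
  shows "irreducible f"
proof (rule irreducibleI)
  have "0 < degree f"
    using l pos(4) by simp
  then show f: "f \<noteq> 0" "\<not> is_unit f"
    by (auto simp: is_unit_poly_iff)
  fix g h
  assume fgh: "f = g * h"
  show "is_unit g \<or> is_unit h"
  proof (rule ccontr)
    assume "\<not> ?thesis"
    then have deg: "0 < degree g" "0 < degree h"
      using prim primitive_not_unit_imp_degree_pos content_prod_eq_1_iff unfolding fgh by blast+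
    have far: "int d < norm (of_int (int n) - z)" if "poly (map_poly of_int f) z = 0" for z :: complex
      using int_poly_roots_far_if_dominant_coeff[OF j _ dom _ _ _ that, of "real n" "real d"] ab nb
      by simp
    have "poly f (int n) dvd int p ^ k * int d"
      using fn by auto
    then have "int p dvd poly g (int n)" "int p dvd poly h (int n)"
      using prime_dvd_factor_value_if_roots_far[OF _ f(1) _ _ _ _ far] deg p(1) pos(2)
      unfolding fgh by simp_all
    moreover have "\<not> int p dvd poly g (int n) \<or> \<not> int p dvd poly h (int n)"
    proof (rule prime_dvd_at_most_one_factor_value[OF _ _ pos(4) fgh])
      show "prime_elem (int p)" "coprime k l"
        using p(1) gcd by (simp_all add: coprime_iff_gcd_eq_1)
      show "poly f (int n) \<noteq> 0" "multiplicity (int p) (poly f (int n)) = k"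
        using fn p pos(2) by (auto simp: prime_gt_0_nat prime_elem_multiplicity_mult_distrib
            not_dvd_imp_multiplicity_0)
      show "int p ^ k dvd coeff (f \<circ>\<^sub>p [:int n, 1:]) i" if "i < l" for i
        using divs[OF that] by (simp add: coeff_taylor_shift)
      show "\<not> int p dvd coeff (f \<circ>\<^sub>p [:int n, 1:]) l" if "1 < k"
        using ndiv[OF that] by (simp add: coeff_taylor_shift)
    qed
    ultimately show False
      by blast
  qed
qed

end
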